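(* Let $(T,\leq)$ be an ordered set and let $T^\ast$ be its ultrapower with respect to an ultrafilter $\mathcal{U}$ on $\mathbb{N}$. Then $T^\ast$ is complete (every nonempty subset of $T^\ast$ that is bounded from above has a least upper bound) if and only if $T$ is finite.
   Context: An ordered set is a nonempty set with a reflexive, antisymmetric, transitive and linear (total) relation $\leq$. An ultrafilter on $\mathbb{N}$ is a nonempty family $\mathcal{U}$ of subsets of $\mathbb{N}$ such that: (1) $K \in \mathcal{U}$, $K \subset L \subset \mathbb{N}$ imply $L \in \mathcal{U}$; (2) $K,L \in \mathcal{U}$ imply $K\cap L \in \mathcal{U}$; (3) every $K \in \mathcal{U}$ is infinite; (4) for every $K \subset \mathbb{N}$, $K \in \mathcal{U}$ or $\mathbb{N}\setminus K \in \mathcal{U}$. The ultrapower $T^\ast$: on the set $\mathcal{T}$ of all sequences $(a_n):\mathbb{N}\to T$ define $(a_n)\sim(b_n)$ iff $\{n : a_n = b_n\} \in \mathcal{U}$; this is an equivalence relation, $T^\ast$ is the set of its classes, $\overline{(a_n)}$ denotes the class of $(a_n)$, and $T^\ast$ is ordered by $\overline{(a_n)} \leq \overline{(b_n)}$ iff $\{ n : a_n \leq b_n\} \in \mathcal{U}$ (a well-defined total order). *)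

theory Defs
  imports Main
begin

definition nat_ultrafilter :: "nat set set \<Rightarrow> bool" where
  "nat_ultrafilter U \<longleftrightarrow>
     U \<noteq> {} \<and>
     (\<forall>K L. K \<in> U \<and> K \<subseteq> L \<longrightarrow> L \<in> U) \<and>
     (\<forall>K L. K \<in> U \<and> L \<in> U \<longrightarrow> K \<inter> L \<in> U) \<and>
     (\<forall>K \<in> U. infinite K) \<and>
     (\<forall>K. K \<in> U \<or> (UNIV - K) \<in> U)"

definition ueq :: "nat set set \<Rightarrow> ((nat \<Rightarrow> 'a) \<times> (nat \<Rightarrow> 'a)) set" where
  "ueq U = {(a, b). {n. a n = b n} \<in> U}"

definition ultrapower :: "nat set set \<Rightarrow> (nat \<Rightarrow> 'a) set set" where
  "ultrapower U = UNIV // ueq U"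

definition uleq :: "nat set set \<Rightarrow> (nat \<Rightarrow> 'a::linorder) set \<Rightarrow> (nat \<Rightarrow> 'a) set \<Rightarrow> bool" where
  "uleq U X Y \<longleftrightarrow> (\<exists>a \<in> X. \<exists>b \<in> Y. {n. a n \<le> b n} \<in> U)"

definition order_complete :: "'b set \<Rightarrow> ('b \<Rightarrow> 'b \<Rightarrow> bool) \<Rightarrow> bool" where
  "order_complete A le \<longleftrightarrow>
     (\<forall>S. S \<subseteq> A \<and> S \<noteq> {} \<and> (\<exists>u \<in> A. \<forall>x \<in> S. le x u) \<longrightarrow>
        (\<exists>s \<in> A. (\<forall>x \<in> S. le x s) \<and> (\<forall>u \<in> A. (\<forall>x \<in> S. le x u) \<longrightarrow> le s u)))"

end

theory Submission
  imports Defs "HOL.Topological_Spaces"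
begin

text \<open>
  If \<open>T\<close> is finite, every sequence is \<open>U\<close>-almost constant, so \<open>T\<^sup>*\<close> is an
  isomorphic copy of \<open>T\<close> and every nonempty subset has a greatest element.
  If \<open>T\<close> is infinite, it contains a strictly monotone sequence \<open>(t\<^sub>k)\<close>, say increasing.
  The constant classes \<open>[t\<^sub>k]\<close> are bounded by the diagonal class \<open>[t]\<close>, yet no
  upper bound \<open>[b]\<close> is least: if \<open>h n\<close> is the first index with \<open>b n < t (h n)\<close>,
  then \<open>c n = t (h n - 2)\<close> (or \<open>c n = t n\<close> when there is no such index) still lies
  above every \<open>t\<^sub>k\<close> almost everywhere and strictly below \<open>b\<close> almost everywhere. A decreasing sequence is handled by the dual argument,
  applied to the set of lower bounds of the \<open>[t\<^sub>k]\<close>.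
\<close>

definition ufilter :: "nat set set \<Rightarrow> nat filter" where
  "ufilter U = Abs_filter (\<lambda>P. {n. P n} \<in> U)"

lemma eventually_ufilter:
  assumes "nat_ultrafilter U"
  shows "eventually P (ufilter U) \<longleftrightarrow> {n. P n} \<in> U"
proof -
  have "is_filter (\<lambda>P. {n. P n} \<in> U)"
  proof
    show "{n. True} \<in> U"
      using assms unfolding nat_ultrafilter_def by blast
  next
    fix P Q :: "nat \<Rightarrow> bool"
    assume "{n. P n} \<in> U" "{n. Q n} \<in> U"
    then show "{n. P n \<and> Q n} \<in> U"
      using assms unfolding nat_ultrafilter_def Collect_conj_eq by blast
  next
    fix P Q :: "nat \<Rightarrow> bool"
    assume "\<forall>n. P n \<longrightarrow> Q n" "{n. P n} \<in> U"
    then show "{n. Q n} \<in> U"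
      using assms unfolding nat_ultrafilter_def by (metis Collect_mono)
  qed
  then show ?thesis
    unfolding ufilter_def by (rule eventually_Abs_filter)
qed

lemma eventually_ufilter_or_not:
  assumes "nat_ultrafilter U"
  shows "eventually P (ufilter U) \<or> (\<forall>\<^sub>F n in ufilter U. \<not> P n)"
  using assms unfolding eventually_ufilter[OF assms] nat_ultrafilter_def
  by (metis Collect_neg_eq Compl_eq_Diff_UNIV)

lemma ufilter_ne_bot:
  assumes "nat_ultrafilter U"
  shows "ufilter U \<noteq> bot"
  using assms unfolding eventually_False[symmetric] eventually_ufilter[OF assms] nat_ultrafilter_def
  by auto

lemma ufilter_le_sequentially:
  assumes "nat_ultrafilter U"
  shows "ufilter U \<le> sequentially"
proof (rule filter_leI)
  fix P assume "eventually P sequentially"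
  then obtain N where "\<forall>n\<ge>N. P n"
    unfolding eventually_sequentially by blast
  moreover have "\<forall>\<^sub>F n in ufilter U. N \<le> n"
  proof -
    have "\<not> (\<forall>\<^sub>F n in ufilter U. n < N)"
      using assms unfolding eventually_ufilter[OF assms] nat_ultrafilter_def
      by (metis finite_Collect_less_nat)
    then show ?thesis
      using eventually_ufilter_or_not[OF assms, of "\<lambda>n. n < N"] by (simp add: not_less)
  qed
  ultimately show "eventually P (ufilter U)"
    by (auto elim: eventually_mono)
qed

lemma eventually_ufilter_ge:
  assumes "nat_ultrafilter U"
  shows "\<forall>\<^sub>F n in ufilter U. k \<le> n"
  using filter_leD[OF ufilter_le_sequentially[OF assms]] eventually_ge_at_top by blast

lemma eventually_constant_if_finite:
  fixes a :: "nat \<Rightarrow> 'a"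
  assumes "nat_ultrafilter U" and "finite (UNIV :: 'a set)"
  shows "\<exists>x. \<forall>\<^sub>F n in ufilter U. a n = x"
proof (rule ccontr)
  assume "\<nexists>x. \<forall>\<^sub>F n in ufilter U. a n = x"
  then have "\<forall>x\<in>UNIV. \<forall>\<^sub>F n in ufilter U. a n \<noteq> x"
    using eventually_ufilter_or_not[OF assms(1)] by blast
  then have "\<forall>\<^sub>F n in ufilter U. \<forall>x\<in>UNIV. a n \<noteq> x"
    by (rule eventually_ball_finite[OF assms(2)])
  then show False
    using ufilter_ne_bot[OF assms(1)] by (simp add: eventually_False)
qed

lemma equiv_ueq:
  assumes "nat_ultrafilter U"
  shows "equiv UNIV (ueq U)"
proof (rule equivI)
  show "ueq U \<subseteq> UNIV \<times> UNIV"
    by simp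
  show "refl (ueq U)"
    using eventually_ufilter[OF assms, of "\<lambda>_. True"] by (auto simp: refl_on_def ueq_def)
  show "sym (ueq U)"
    by (auto simp: sym_def ueq_def eq_commute)
  show "trans (ueq U)"
  proof (rule transI)
    fix a b c
    assume "(a, b) \<in> ueq U" "(b, c) \<in> ueq U"
    then have "\<forall>\<^sub>F n in ufilter U. a n = b n" "\<forall>\<^sub>F n in ufilter U. b n = c n"
      by (simp_all add: ueq_def eventually_ufilter[OF assms])
    then have "\<forall>\<^sub>F n in ufilter U. a n = c n"
      by eventually_elim simp
    then show "(a, c) \<in> ueq U"
      by (simp add: ueq_def eventually_ufilter[OF assms])
  qed
qed

lemma ultrapower_eq_range: "ultrapower U = range (\<lambda>a. ueq U `` {a})"
  by (auto simp: ultrapower_def quotient_def)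

lemma uleq_classes_iff:
  fixes a b :: "nat \<Rightarrow> 'a::linorder"
  assumes "nat_ultrafilter U"
  shows "uleq U (ueq U `` {a}) (ueq U `` {b}) \<longleftrightarrow> (\<forall>\<^sub>F n in ufilter U. a n \<le> b n)"
proof
  assume "uleq U (ueq U `` {a}) (ueq U `` {b})"
  then obtain a' b' where "\<forall>\<^sub>F n in ufilter U. a n = a' n" "\<forall>\<^sub>F n in ufilter U. b n = b' n"
    "\<forall>\<^sub>F n in ufilter U. a' n \<le> b' n"
    by (auto simp: uleq_def ueq_def eventually_ufilter[OF assms])
  then show "\<forall>\<^sub>F n in ufilter U. a n \<le> b n"
    by eventually_elim simp
next
  assume "\<forall>\<^sub>F n in ufilter U. a n \<le> b n"
  moreover have "a \<in> ueq U `` {a}" "b \<in> ueq U `` {b}"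
    using equiv_class_self[OF equiv_ueq[OF assms]] by blast+
  ultimately show "uleq U (ueq U `` {a}) (ueq U `` {b})"
    unfolding uleq_def eventually_ufilter[OF assms] by blast
qed

lemma ultrapower_eq_constants_if_finite:
  assumes "nat_ultrafilter U" and "finite (UNIV :: 'a set)"
  shows "(ultrapower U :: (nat \<Rightarrow> 'a) set set) = range (\<lambda>x. ueq U `` {\<lambda>_. x})"
proof -
  have "ueq U `` {a} \<in> range (\<lambda>x. ueq U `` {\<lambda>_. x})" for a :: "nat \<Rightarrow> 'a"
  proof -
    obtain x where "\<forall>\<^sub>F n in ufilter U. a n = x"
      using eventually_constant_if_finite[OF assms] by blast
    then have "ueq U `` {a} = ueq U `` {\<lambda>_. x}"
      using equiv_ueq[OF assms(1)]
      by (intro equiv_class_eq) (simp_all add: ueq_def eventually_ufilter[OF assms(1)])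
    then show ?thesis by blast
  qed
  then show ?thesis
    unfolding ultrapower_eq_range by auto
qed

lemma order_completeE:
  assumes "order_complete A le" "S \<subseteq> A" "S \<noteq> {}" "u \<in> A" "\<forall>x\<in>S. le x u"
  obtains s where "s \<in> A" "\<forall>x\<in>S. le x s" "\<forall>u\<in>A. (\<forall>x\<in>S. le x u) \<longrightarrow> le s u"
proof -
  have "S \<subseteq> A \<and> S \<noteq> {} \<and> (\<exists>u\<in>A. \<forall>x\<in>S. le x u)"
    using assms(2-5) by blast
  with assms(1) show ?thesis
    unfolding order_complete_def using that by blast
qed

lemma order_complete_range_if_finite:
  fixes f :: "'a::linorder \<Rightarrow> 'b"
  assumes "finite (UNIV :: 'a set)" and embedding: "\<And>x y. le (f x) (f y) \<longleftrightarrow> x \<le> y"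
  shows "order_complete (range f) le"
  unfolding order_complete_def
proof (intro allI impI)
  fix S assume "S \<subseteq> range f \<and> S \<noteq> {} \<and> (\<exists>u\<in>range f. \<forall>x\<in>S. le x u)"
  then have S: "S \<subseteq> range f" "f -` S \<noteq> {}"
    by auto
  have "finite (f -` S)"
    using assms(1) by (rule finite_subset[rotated]) simp
  define m where "m = Max (f -` S)"
  have "f m \<in> S"
    unfolding m_def using Max_in[OF \<open>finite (f -` S)\<close> S(2)] by simp
  show "\<exists>s\<in>range f. (\<forall>x\<in>S. le x s) \<and> (\<forall>u\<in>range f. (\<forall>x\<in>S. le x u) \<longrightarrow> le s u)"
  proof (intro bexI conjI ballI impI)
    fix x assume "x \<in> S"
    then obtain y where "x = f y" "y \<in> f -` S"
      using S(1) by auto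
    then show "le x (f m)"
      unfolding m_def using Max_ge[OF \<open>finite (f -` S)\<close>] embedding by simp
  next
    fix u assume "\<forall>x\<in>S. le x u"
    then show "le (f m) u"
      using \<open>f m \<in> S\<close> by blast
  qed simp
qed

context linorder
begin

text \<open>
  If \<open>y\<close> bounds the whole sequence, \<open>j = n\<close> works; otherwise step back two places from
  the first index \<open>h\<close> with \<open>y < t h\<close>.
\<close>
lemma strict_mono_index_below:
  fixes t :: "nat \<Rightarrow> 'a"
  assumes mono: "monotone (<) (<) t"
  shows "\<exists>j. (t 1 \<le> y \<longrightarrow> t j < y) \<and> (\<forall>k\<le>n. t (Suc k) \<le> y \<longrightarrow> t k \<le> t j)"
proof -
  have less: "i < j \<Longrightarrow> t i < t j" for i j
    using mono by (simp add: monotone_on_def)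
  have le: "i \<le> j \<Longrightarrow> t i \<le> t j" for i j
    using less[of i j] by (cases "i = j") (auto dest: Nat.le_neq_implies_less)
  show ?thesis
  proof (cases "\<forall>k. t k \<le> y")
    case True
    then have "t n < y"
      using less[of n "Suc n"] by (meson less_le_trans lessI)
    then show ?thesis
      using le by blast
  next
    case False
    define h where "h = (LEAST k. y < t k)"
    have "y < t h"
      using False unfolding h_def by (metis LeastI_ex not_le)
    have below_h: "k < h" if "t k \<le> y" for k
    proof (rule ccontr)
      assume "\<not> k < h"
      then have "t h \<le> t k"
        by (simp add: le)
      with \<open>y < t h\<close> that show False
        by simp
    qed
    have "t 1 \<le> y \<longrightarrow> t (h - 2) < y"
    proof
      assume "t 1 \<le> y"
      then have "1 < h"
        by (rule below_h)
      moreover have "t (h - 1) \<le> y"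
        using \<open>1 < h\<close> not_less_Least[of "h - 1" "\<lambda>k. y < t k"] unfolding h_def
        by (simp add: not_less)
      moreover have "t (h - 2) < t (h - 1)"
        using \<open>1 < h\<close> by (intro less) simp
      ultimately show "t (h - 2) < y"
        by simp
    qed
    moreover have "t k \<le> t (h - 2)" if "t (Suc k) \<le> y" for k
      using below_h[OF that] le[of k "h - 2"] by simp
    ultimately show ?thesis
      by blast
  qed
qed

lemma strict_mono_eventually_gap:
  fixes t b :: "nat \<Rightarrow> 'a"
  assumes mono: "monotone (<) (<) t" and "F \<le> sequentially"
    and bound: "\<And>k. \<forall>\<^sub>F n in F. t k \<le> b n"
  shows "\<exists>c. (\<forall>k. \<forall>\<^sub>F n in F. t k \<le> c n) \<and> (\<forall>\<^sub>F n in F. c n < b n)"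
proof -
  have "\<forall>n. \<exists>j. (t 1 \<le> b n \<longrightarrow> t j < b n) \<and> (\<forall>k\<le>n. t (Suc k) \<le> b n \<longrightarrow> t k \<le> t j)"
    using strict_mono_index_below[OF mono] by blast
  then obtain g where g: "\<forall>n. (t 1 \<le> b n \<longrightarrow> t (g n) < b n)
      \<and> (\<forall>k\<le>n. t (Suc k) \<le> b n \<longrightarrow> t k \<le> t (g n))"
    by (auto dest!: choice)
  have "\<forall>\<^sub>F n in F. t k \<le> t (g n)" for k
  proof -
    have "\<forall>\<^sub>F n in F. k \<le> n"
      using filter_leD[OF \<open>F \<le> sequentially\<close>] eventually_ge_at_top by blast
    then show ?thesis
      using bound[of "Suc k"] by eventually_elim (use g in blast)
  qed
  moreover have "\<forall>\<^sub>F n in F. t (g n) < b n"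
    using bound[of 1] by eventually_elim (use g in blast)
  ultimately show ?thesis
    by (intro exI[of _ "\<lambda>n. t (g n)"]) blast
qed

end

lemma infinite_imp_strict_mono_or_antimono:
  assumes "infinite (UNIV :: 'a::linorder set)"
  obtains t :: "nat \<Rightarrow> 'a::linorder" where "strict_mono t \<or> strict_antimono_on UNIV t"
proof -
  obtain f :: "nat \<Rightarrow> 'a" where "inj f"
    using infinite_countable_subset[OF assms] by blast
  obtain g where "strict_mono g" "monoseq (f \<circ> g)"
    using seq_monosub[of f] unfolding comp_def by blast
  moreover have "inj (f \<circ> g)"
    using \<open>inj f\<close> \<open>strict_mono g\<close> by (simp add: inj_compose strict_mono_imp_inj_on)
  ultimately have "strict_mono (f \<circ> g) \<or> strict_antimono_on UNIV (f \<circ> g)"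
    using monoseq_iff strict_mono_iff_mono strict_antimono_iff_antimono by metis
  then show ?thesis
    by (rule that)
qed

lemma ultrapower_lubE:
  fixes u :: "nat \<Rightarrow> 'a::linorder" and S :: "(nat \<Rightarrow> 'a) set set"
  assumes "order_complete (ultrapower U :: (nat \<Rightarrow> 'a) set set) (uleq U)"
    and "S \<subseteq> ultrapower U" "S \<noteq> {}"
    "\<forall>x\<in>S. uleq U x (ueq U `` {u})"
  obtains b where "\<forall>x\<in>S. uleq U x (ueq U `` {b})"
    "\<And>a. \<forall>x\<in>S. uleq U x (ueq U `` {a}) \<Longrightarrow> uleq U (ueq U `` {b}) (ueq U `` {a})"
proof -
  have u: "ueq U `` {u} \<in> ultrapower U"
    by (simp add: ultrapower_eq_range)
  obtain s where s: "s \<in> ultrapower U" "\<forall>x\<in>S. uleq U x s"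
    "\<forall>v\<in>ultrapower U. (\<forall>x\<in>S. uleq U x v) \<longrightarrow> uleq U s v"
    using order_completeE[OF assms(1-3) u assms(4)] by blast
  then obtain b where "s = ueq U `` {b}"
    unfolding ultrapower_eq_range by blast
  with s(2,3) show ?thesis
    by (intro that) (auto simp: ultrapower_eq_range)
qed

lemma ultrapower_not_complete_if_strict_mono:
  fixes t :: "nat \<Rightarrow> 'a::linorder"
  assumes U: "nat_ultrafilter U" and "strict_mono t"
  shows "\<not> order_complete (ultrapower U :: (nat \<Rightarrow> 'a) set set) (uleq U)"
proof
  assume complete: "order_complete (ultrapower U :: (nat \<Rightarrow> 'a) set set) (uleq U)"
  define S where "S = range (\<lambda>k. ueq U `` {\<lambda>_. t k})"
  have upper_iff: "(\<forall>x\<in>S. uleq U x (ueq U `` {a})) \<longleftrightarrow> (\<forall>k. \<forall>\<^sub>F n in ufilter U. t k \<le> a n)" for a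
    unfolding S_def by (simp add: uleq_classes_iff[OF U])
  have S_sub: "S \<subseteq> ultrapower U" and S_ne: "S \<noteq> {}"
    unfolding S_def ultrapower_eq_range by auto
  have bound: "\<forall>x\<in>S. uleq U x (ueq U `` {t})"
  proof -
    have "\<forall>\<^sub>F n in ufilter U. t k \<le> t n" for k
      using eventually_ufilter_ge[OF U, of k]
      by eventually_elim (simp add: strict_mono_less_eq[OF \<open>strict_mono t\<close>])
    then show ?thesis
      by (simp add: upper_iff)
  qed
  obtain b where b_upper: "\<forall>x\<in>S. uleq U x (ueq U `` {b})"
    and b_least: "\<And>a. \<forall>x\<in>S. uleq U x (ueq U `` {a}) \<Longrightarrow> uleq U (ueq U `` {b}) (ueq U `` {a})"
    using ultrapower_lubE[OF complete S_sub S_ne bound] by blast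
  have "\<forall>\<^sub>F n in ufilter U. t k \<le> b n" for k
    using b_upper by (simp add: upper_iff)
  then obtain c where c_upper: "\<forall>k. \<forall>\<^sub>F n in ufilter U. t k \<le> c n"
    and c_below: "\<forall>\<^sub>F n in ufilter U. c n < b n"
    using strict_mono_eventually_gap[OF \<open>strict_mono t\<close> ufilter_le_sequentially[OF U]] by blast
  have "\<forall>\<^sub>F n in ufilter U. b n \<le> c n"
    using b_least c_upper by (simp add: upper_iff uleq_classes_iff[OF U])
  with c_below have "\<forall>\<^sub>F n in ufilter U. False"
    by eventually_elim simp
  then show False
    using ufilter_ne_bot[OF U] by simp
qed

lemma ultrapower_not_complete_if_strict_antimono:
  fixes t :: "nat \<Rightarrow> 'a::linorder"
  assumes U: "nat_ultrafilter U" and "strict_antimono_on UNIV t"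
  shows "\<not> order_complete (ultrapower U :: (nat \<Rightarrow> 'a) set set) (uleq U)"
proof
  assume complete: "order_complete (ultrapower U :: (nat \<Rightarrow> 'a) set set) (uleq U)"
  define S where "S = {x \<in> ultrapower U. \<forall>k. uleq U x (ueq U `` {\<lambda>_. t k})}"
  have S_iff: "ueq U `` {a} \<in> S \<longleftrightarrow> (\<forall>k. \<forall>\<^sub>F n in ufilter U. a n \<le> t k)" for a
    unfolding S_def ultrapower_eq_range by (simp add: uleq_classes_iff[OF U])
  have "\<forall>\<^sub>F n in ufilter U. t n \<le> t k" for k
    using eventually_ufilter_ge[OF U, of k] by eventually_elim
      (use \<open>strict_antimono_on UNIV t\<close> in \<open>simp add: strict_antimono_iff_antimono antimonoD\<close>)
  then have "ueq U `` {t} \<in> S"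
    by (simp add: S_iff)
  then have S_ne: "S \<noteq> {}"
    by blast
  have S_sub: "S \<subseteq> ultrapower U" and bound: "\<forall>x\<in>S. uleq U x (ueq U `` {\<lambda>_. t 0})"
    unfolding S_def by auto
  obtain b where b_upper: "\<forall>x\<in>S. uleq U x (ueq U `` {b})"
    and b_least: "\<And>a. \<forall>x\<in>S. uleq U x (ueq U `` {a}) \<Longrightarrow> uleq U (ueq U `` {b}) (ueq U `` {a})"
    using ultrapower_lubE[OF complete S_sub S_ne bound] by blast
  have "\<forall>\<^sub>F n in ufilter U. b n \<le> t k" for k
    using b_least[of "\<lambda>_. t k"] unfolding S_def by (simp add: uleq_classes_iff[OF U])
  then obtain c where c_lower: "\<forall>k. \<forall>\<^sub>F n in ufilter U. c n \<le> t k"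
    and c_above: "\<forall>\<^sub>F n in ufilter U. b n < c n"
    using linorder.strict_mono_eventually_gap[OF dual_linorder \<open>strict_antimono_on UNIV t\<close>
        ufilter_le_sequentially[OF U]]
    by blast
  have "\<forall>\<^sub>F n in ufilter U. c n \<le> b n"
    using b_upper c_lower by (simp add: S_iff flip: uleq_classes_iff[OF U])
  with c_above have "\<forall>\<^sub>F n in ufilter U. False"
    by eventually_elim simp
  then show False
    using ufilter_ne_bot[OF U] by simp
qed

theorem mainTheorem6:
  fixes U :: "nat set set"
  assumes "nat_ultrafilter U"
  shows "order_complete (ultrapower U :: (nat \<Rightarrow> 'a::linorder) set set) (uleq U)
           \<longleftrightarrow> finite (UNIV :: 'a set)"
proof
  assume complete: "order_complete (ultrapower U :: (nat \<Rightarrow> 'a::linorder) set set) (uleq U)"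
  show "finite (UNIV :: 'a set)"
  proof (rule ccontr)
    assume "infinite (UNIV :: 'a set)"
    then obtain t :: "nat \<Rightarrow> 'a" where "strict_mono t \<or> strict_antimono_on UNIV t"
      by (rule infinite_imp_strict_mono_or_antimono)
    then show False
      using complete ultrapower_not_complete_if_strict_mono[OF assms]
        ultrapower_not_complete_if_strict_antimono[OF assms]
      by blast
  qed
next
  assume finite: "finite (UNIV :: 'a set)"
  show "order_complete (ultrapower U :: (nat \<Rightarrow> 'a::linorder) set set) (uleq U)"
    unfolding ultrapower_eq_constants_if_finite[OF assms finite]
    by (rule order_complete_range_if_finite[OF finite])
      (simp add: uleq_classes_iff[OF assms] ufilter_ne_bot[OF assms])
qed

end
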